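(* Let $p$ be an odd prime, $R=F_p+vF_p$ with $v^2=v$, $\theta=\lambda+v\mu$ ($\lambda,\mu\in F_p$) a unit of $R$, and let $C$ be a $\theta$-constacyclic code of length $n$ over $R$ with generating set in standard form $\{vg_{1-v}(x),(1-v)g_v(x)\}$. Then $\phi_\theta(C)\subseteq\langle g_{1-v}(x)g_v(x)\rangle$ in $F_p[x]/\langle x^{2n}-1\rangle$.
   Context: A $\theta$-constacyclic code of length $n$ over $R$ is an $R$-submodule of $R^n$ closed under $(c_0,\dots,c_{n-1})\mapsto(\theta c_{n-1},c_0,\dots,c_{n-2})$, identified with an ideal of $R_n=R[x]/\langle x^n-\theta\rangle$ via $(c_i)\mapsto\sum c_ix^i$. A set $\{vg_1(x),(1-v)g_2(x)\}$ is a generating set in standard form for $C$ if it generates $C$ as an ideal, each $g_i\in F_p[x]$ is monic or $0$, $g_1\mid x^n-(\lambda+\mu)$ if $g_1\ne0$, and $g_2\mid x^n-\lambda$ if $g_2\neq0$. The polynomial Gray map $\phi_\theta:R_n\to F_p[x]/\langle x^{2n}-1\rangle$ is defined by writing $f(x)\in R_n$ (degree $<n$) as $f(x)=r(x)+vq(x)$ with $r,q\in F_p[x]$ of degree $<n$ and setting $\phi_\theta(f)=\lambda(\lambda+\mu)q(x)+x^n[-\mu r(x)-(\lambda+\mu)q(x)]$. *)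

theory Defs
  imports "HOL-Computational_Algebra.Polynomial" "HOL-Computational_Algebra.Primes" "HOL-Library.Cardinality"
begin

text \<open>The ring R = F + vF with v^2 = v.  The element VR a b stands for a + v b.\<close>
datatype 'a vr = VR (re: 'a) (vp: 'a)

instantiation vr :: (comm_ring_1) comm_ring_1
begin
definition "0 = VR 0 0"
definition "1 = VR 1 0"
definition "x + y = VR (re x + re y) (vp x + vp y)"
definition "x - y = VR (re x - re y) (vp x - vp y)"
definition "- x = VR (- re x) (- vp x)"
definition "x * y = VR (re x * re y) (re x * vp y + vp x * re y + vp x * vp y)"
instance
  by standard (auto simp: zero_vr_def one_vr_def plus_vr_def minus_vr_def uminus_vr_def
      times_vr_def algebra_simps intro: vr.expand)
end

definition vR :: "'a::comm_ring_1 vr" where "vR = VR 0 1"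

definition emb :: "'a::comm_ring_1 poly \<Rightarrow> 'a vr poly" where
  "emb g = map_poly (\<lambda>a. VR a 0) g"

text \<open>Elements of R_n = R[x]/<x^n - theta>, represented by polynomials of degree < n.\<close>
definition Rn :: "nat \<Rightarrow> 'a::comm_ring_1 vr poly set" where
  "Rn n = {f. f = 0 \<or> degree f < n}"

text \<open>Reduction modulo x^n - theta (x^(i+kn) = theta^k x^i).\<close>
definition reduce :: "nat \<Rightarrow> 'a::comm_ring_1 vr \<Rightarrow> 'a vr poly \<Rightarrow> 'a vr poly" where
  "reduce n \<theta> f = (\<Sum>i<n. monom (\<Sum>k\<le>degree f. \<theta> ^ k * coeff f (i + k * n)) i)"

text \<open>Theta-constacyclic code of length n over R, in polynomial coordinates:
  an R-submodule of R^n closed under the constacyclic shift (multiplication by x in R_n).\<close>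
definition constacyclic_code :: "nat \<Rightarrow> 'a::comm_ring_1 vr \<Rightarrow> 'a vr poly set \<Rightarrow> bool" where
  "constacyclic_code n \<theta> C \<longleftrightarrow> C \<subseteq> Rn n \<and> 0 \<in> C \<and>
     (\<forall>f\<in>C. \<forall>g\<in>C. f + g \<in> C) \<and> (\<forall>a. \<forall>f\<in>C. smult a f \<in> C) \<and>
     (\<forall>f\<in>C. reduce n \<theta> (monom 1 1 * f) \<in> C)"

definition Rn_ideal :: "nat \<Rightarrow> 'a::comm_ring_1 vr \<Rightarrow> 'a vr poly set \<Rightarrow> bool" where
  "Rn_ideal n \<theta> I \<longleftrightarrow> I \<subseteq> Rn n \<and> 0 \<in> I \<and>
     (\<forall>f\<in>I. \<forall>g\<in>I. f + g \<in> I) \<and> (\<forall>a\<in>Rn n. \<forall>f\<in>I. reduce n \<theta> (a * f) \<in> I)"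

definition Rn_ideal_gen :: "nat \<Rightarrow> 'a::comm_ring_1 vr \<Rightarrow> 'a vr poly set \<Rightarrow> 'a vr poly set" where
  "Rn_ideal_gen n \<theta> S = \<Inter> {I. Rn_ideal n \<theta> I \<and> S \<subseteq> I}"

definition gray :: "nat \<Rightarrow> 'a::comm_ring_1 \<Rightarrow> 'a \<Rightarrow> 'a vr poly \<Rightarrow> 'a poly" where
  "gray n lam mu f = (let r = map_poly re f; q = map_poly vp f in
     smult (lam * (lam + mu)) q + monom 1 n * (smult (- mu) r - smult (lam + mu) q))"

end

theory Submission
  imports Defs
begin

text \<open>The ring \<open>R\<close> splits as \<open>F \<times> F\<close> through the two evaluations \<open>v \<mapsto> 0\<close> (\<open>a + v b \<mapsto> a\<close>)
  and \<open>v \<mapsto> 1\<close> (\<open>a + v b \<mapsto> a + b\<close>), which send \<open>\<theta> = \<lambda> + v \<mu>\<close> to \<open>\<lambda>\<close> and to \<open>\<lambda> + \<mu>\<close>.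
  Since reduction modulo \<open>x\<^sup>n - \<theta>\<close> changes a polynomial only by a multiple of \<open>x\<^sup>n - \<theta>\<close>, the
  polynomials of \<open>R\<^sub>n\<close> whose image under \<open>v \<mapsto> 0\<close> is divisible by \<open>g\<^sub>v\<close> form an ideal, and
  likewise for \<open>v \<mapsto> 1\<close> and \<open>g\<^sub>1\<^sub>-\<^sub>v\<close>; both contain the generators, hence \<open>C\<close>.
  Finally, for \<open>f = r + v q\<close> the Gray image equals
  \<open>-(\<lambda> + \<mu>) (r + q) (x\<^sup>n - \<lambda>) + \<lambda> r (x\<^sup>n - \<lambda> - \<mu>)\<close>, and both summands are divisible
  by \<open>g\<^sub>1\<^sub>-\<^sub>v g\<^sub>v\<close>.\<close>

lemma reduce_eq_bound:
  assumes "n > 0" "degree f \<le> N"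
  shows "reduce n \<theta> f = (\<Sum>i<n. monom (\<Sum>k\<le>N. \<theta> ^ k * coeff f (i + k * n)) i)"
  unfolding reduce_def
proof (rule sum.cong[OF refl])
  fix i
  have "(\<Sum>k\<le>degree f. \<theta> ^ k * coeff f (i + k * n)) = (\<Sum>k\<le>N. \<theta> ^ k * coeff f (i + k * n))"
  proof (rule sum.mono_neutral_left)
    show "\<forall>k\<in>{..N} - {..degree f}. \<theta> ^ k * coeff f (i + k * n) = 0"
    proof
      fix k assume "k \<in> {..N} - {..degree f}"
      moreover have "k \<le> i + k * n" using assms(1) by (cases n) auto
      ultimately show "\<theta> ^ k * coeff f (i + k * n) = 0" by (simp add: coeff_eq_0)
    qed
  qed (use assms in auto)
  then show "monom (\<Sum>k\<le>degree f. \<theta> ^ k * coeff f (i + k * n)) i =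
      monom (\<Sum>k\<le>N. \<theta> ^ k * coeff f (i + k * n)) i" by simp
qed

lemma reduce_0 [simp]: "reduce n \<theta> 0 = 0"
  by (simp add: reduce_def)

lemma reduce_add:
  assumes "n > 0"
  shows "reduce n \<theta> (f + g) = reduce n \<theta> f + reduce n \<theta> g"
proof -
  let ?N = "max (degree f) (degree g)"
  have eq: "reduce n \<theta> h = (\<Sum>i<n. monom (\<Sum>k\<le>?N. \<theta> ^ k * coeff h (i + k * n)) i)"
    if "degree h \<le> ?N" for h
    using assms that by (rule reduce_eq_bound)
  show ?thesis
    by (simp only: eq[OF degree_add_le_max] eq[OF max.cobounded1] eq[OF max.cobounded2])
      (simp add: distrib_left sum.distrib add_monom[symmetric])
qed

lemma reduce_sum:
  assumes "n > 0"
  shows "reduce n \<theta> (\<Sum>j\<in>A. f j) = (\<Sum>j\<in>A. reduce n \<theta> (f j))"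
  by (induction A rule: infinite_finite_induct) (simp_all add: reduce_add[OF assms])

lemma reduce_monom:
  assumes "n > 0"
  shows "reduce n \<theta> (monom c j) = monom (\<theta> ^ (j div n) * c) (j mod n)"
proof -
  have coeff_sum: "(\<Sum>k\<le>j. \<theta> ^ k * coeff (monom c j) (i + k * n)) =
      (if i = j mod n then \<theta> ^ (j div n) * c else 0)" if "i < n" for i
  proof -
    have index: "j = i + k * n \<longleftrightarrow> k = j div n \<and> i = j mod n" for k
    proof
      assume "j = i + k * n"
      then show "k = j div n \<and> i = j mod n" using that by simp
    next
      assume "k = j div n \<and> i = j mod n"
      then show "j = i + k * n" by (metis div_mult_mod_eq add.commute)
    qed
    have "(\<Sum>k\<le>j. \<theta> ^ k * coeff (monom c j) (i + k * n)) =
          (\<Sum>k\<le>j. if k = j div n then (if i = j mod n then \<theta> ^ k * c else 0) else 0)"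
      by (rule sum.cong) (auto simp: coeff_monom index)
    also have "\<dots> = (if i = j mod n then \<theta> ^ (j div n) * c else 0)"
      by (simp add: sum.delta div_le_dividend)
    finally show ?thesis .
  qed
  have "reduce n \<theta> (monom c j) = (\<Sum>i<n. monom (\<Sum>k\<le>j. \<theta> ^ k * coeff (monom c j) (i + k * n)) i)"
    using assms degree_monom_le by (rule reduce_eq_bound)
  also have "\<dots> = (\<Sum>i<n. if i = j mod n then monom (\<theta> ^ (j div n) * c) i else 0)"
    by (rule sum.cong) (simp_all add: coeff_sum del: coeff_monom)
  also have "\<dots> = monom (\<theta> ^ (j div n) * c) (j mod n)"
    using assms by (simp add: sum.delta)
  finally show ?thesis .
qed

lemma dvd_monom_diff_power:
  fixes c \<theta> :: "'a::comm_ring_1"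
  shows "(monom 1 n - [:\<theta>:]) dvd (monom c (r + q * n) - monom (\<theta> ^ q * c) r)"
proof -
  have "(monom 1 n - [:\<theta>:]) dvd (monom 1 n ^ q - [:\<theta>:] ^ q)"
    by (simp add: power_diff_sumr2)
  also have "monom 1 n ^ q - [:\<theta>:] ^ q = monom 1 (q * n) - [:\<theta> ^ q:]"
    by (simp add: monom_power poly_const_pow mult.commute)
  finally have "(monom 1 n - [:\<theta>:]) dvd monom c r * (monom 1 (q * n) - [:\<theta> ^ q:])"
    by (rule dvd_mult)
  also have "monom c r * (monom 1 (q * n) - [:\<theta> ^ q:]) = monom c (r + q * n) - monom (\<theta> ^ q * c) r"
    by (simp add: right_diff_distrib mult_monom smult_monom mult.commute)
  finally show ?thesis .
qed

lemma dvd_diff_reduce: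
  assumes "n > 0"
  shows "(monom 1 n - [:\<theta>:]) dvd (f - reduce n \<theta> f)"
proof -
  have "f - reduce n \<theta> f = (\<Sum>j\<le>degree f. monom (coeff f j) j - reduce n \<theta> (monom (coeff f j) j))"
    by (simp add: sum_subtractf poly_as_sum_of_monoms flip: reduce_sum[OF assms])
  also have "(monom 1 n - [:\<theta>:]) dvd \<dots>"
  proof (rule dvd_sum)
    fix j
    show "(monom 1 n - [:\<theta>:]) dvd (monom (coeff f j) j - reduce n \<theta> (monom (coeff f j) j))"
      using dvd_monom_diff_power[of n \<theta> "coeff f j" "j mod n" "j div n"] assms
      by (simp add: reduce_monom)
  qed
  finally show ?thesis .
qed

lemma reduce_in_Rn: "reduce n \<theta> f \<in> Rn n"
proof -
  have "\<forall>k\<ge>n. coeff (reduce n \<theta> f) k = 0"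
    unfolding reduce_def by (auto simp: coeff_sum coeff_monom)
  then show ?thesis
    unfolding Rn_def by (cases "reduce n \<theta> f = 0") (auto intro: degree_lessI)
qed

lemma Rn_add: "f \<in> Rn n \<Longrightarrow> g \<in> Rn n \<Longrightarrow> f + g \<in> Rn n"
  unfolding Rn_def using degree_add_le_max[of f g] by auto

lemma Rn_ideal_gen_subset: "Rn_ideal n \<theta> I \<Longrightarrow> S \<subseteq> I \<Longrightarrow> Rn_ideal_gen n \<theta> S \<subseteq> I"
  unfolding Rn_ideal_gen_def by blast

locale comm_ring_hom =
  fixes h :: "'a::comm_ring_1 \<Rightarrow> 'b::comm_ring_1"
  assumes hom_add: "h (x + y) = h x + h y"
    and hom_mult: "h (x * y) = h x * h y"
    and hom_one: "h 1 = 1"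
begin

lemma hom_zero: "h 0 = 0"
  using hom_add[of 0 0] by simp

lemma hom_diff: "h (x - y) = h x - h y"
  using hom_add[of "x - y" y] by simp

lemma hom_sum: "h (\<Sum>i\<in>A. f i) = (\<Sum>i\<in>A. h (f i))"
  by (induction A rule: infinite_finite_induct) (simp_all add: hom_zero hom_add)

lemma map_poly_add: "map_poly h (p + q) = map_poly h p + map_poly h q"
  by (rule poly_eqI) (simp add: coeff_map_poly hom_zero hom_add)

lemma map_poly_diff: "map_poly h (p - q) = map_poly h p - map_poly h q"
  by (rule poly_eqI) (simp add: coeff_map_poly hom_zero hom_diff)

lemma map_poly_mult: "map_poly h (p * q) = map_poly h p * map_poly h q"
  by (rule poly_eqI) (simp add: coeff_map_poly hom_zero coeff_mult hom_sum hom_mult)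

lemma map_poly_monom_sub_const: "map_poly h (monom 1 n - [:c:]) = monom 1 n - [:h c:]"
  by (simp add: map_poly_diff map_poly_monom map_poly_pCons hom_zero hom_one)

end

lemma map_poly_reduce_dvd:
  assumes "comm_ring_hom h" "n > 0"
    and "g dvd monom 1 n - [:h \<theta>:]" "g dvd map_poly h f"
  shows "g dvd map_poly h (reduce n \<theta> f)"
proof -
  interpret comm_ring_hom h by fact
  obtain Q where "f - reduce n \<theta> f = (monom 1 n - [:\<theta>:]) * Q"
    using dvd_diff_reduce[OF \<open>n > 0\<close>] by (rule dvdE)
  then have "reduce n \<theta> f = f - (monom 1 n - [:\<theta>:]) * Q"
    by (simp add: algebra_simps)
  then have "map_poly h (reduce n \<theta> f) = map_poly h f - (monom 1 n - [:h \<theta>:]) * map_poly h Q"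
    by (simp only: map_poly_diff[of f] map_poly_mult map_poly_monom_sub_const)
  then show ?thesis
    using assms(3,4) by (simp only: dvd_diff dvd_mult2)
qed

lemma Rn_ideal_map_poly_dvd:
  assumes "comm_ring_hom h" "n > 0" "g dvd monom 1 n - [:h \<theta>:]"
  shows "Rn_ideal n \<theta> {f \<in> Rn n. g dvd map_poly h f}"
proof -
  interpret comm_ring_hom h by fact
  show ?thesis
    unfolding Rn_ideal_def
  proof (intro conjI ballI)
    show "0 \<in> {f \<in> Rn n. g dvd map_poly h f}"
      by (simp add: Rn_def)
  next
    fix p q assume "p \<in> {f \<in> Rn n. g dvd map_poly h f}" "q \<in> {f \<in> Rn n. g dvd map_poly h f}"
    then show "p + q \<in> {f \<in> Rn n. g dvd map_poly h f}"
      by (simp add: Rn_add map_poly_add)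
  next
    fix a p assume "p \<in> {f \<in> Rn n. g dvd map_poly h f}"
    then have "g dvd map_poly h (a * p)"
      by (simp add: map_poly_mult)
    then show "reduce n \<theta> (a * p) \<in> {f \<in> Rn n. g dvd map_poly h f}"
      using assms by (simp add: reduce_in_Rn map_poly_reduce_dvd)
  qed blast
qed

lemma Rn_ideal_gen_reduce_subset_dvd:
  assumes "comm_ring_hom h" "n > 0" "g dvd monom 1 n - [:h \<theta>:]"
    and "\<forall>s\<in>S. g dvd map_poly h s"
  shows "Rn_ideal_gen n \<theta> (reduce n \<theta> ` S) \<subseteq> {f \<in> Rn n. g dvd map_poly h f}"
  using assms
  by (intro Rn_ideal_gen_subset Rn_ideal_map_poly_dvd) (auto simp: reduce_in_Rn intro: map_poly_reduce_dvd)

definition vr_eval1 :: "'a::comm_ring_1 vr \<Rightarrow> 'a" where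
  "vr_eval1 z = re z + vp z"

lemma comm_ring_hom_re: "comm_ring_hom (re :: 'a::comm_ring_1 vr \<Rightarrow> 'a)"
  by standard (simp_all add: plus_vr_def times_vr_def one_vr_def)

lemma comm_ring_hom_vr_eval1: "comm_ring_hom (vr_eval1 :: 'a::comm_ring_1 vr \<Rightarrow> 'a)"
  by standard (simp_all add: vr_eval1_def plus_vr_def times_vr_def one_vr_def algebra_simps)

lemma map_poly_re_generators:
  "map_poly re (smult vR (emb g)) = 0"
  "map_poly re (smult (1 - vR) (emb g)) = g"
  by (simp_all add: poly_eq_iff coeff_map_poly emb_def vR_def times_vr_def zero_vr_def
      one_vr_def minus_vr_def)

lemma map_poly_vr_eval1_generators:
  "map_poly vr_eval1 (smult vR (emb g)) = g"
  "map_poly vr_eval1 (smult (1 - vR) (emb g)) = 0"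
  by (simp_all add: poly_eq_iff coeff_map_poly emb_def vR_def vr_eval1_def times_vr_def
      zero_vr_def one_vr_def minus_vr_def)

lemma gray_eq:
  "gray n lam mu f =
     smult (- (lam + mu)) (map_poly vr_eval1 f) * (monom 1 n - [:lam:]) +
     smult lam (map_poly re f) * (monom 1 n - [:lam + mu:])"
proof -
  have identity: "smult (lam * (lam + mu)) q + X * (smult (- mu) r - smult (lam + mu) q) =
      smult (- (lam + mu)) (r + q) * (X - [:lam:]) + smult lam r * (X - [:lam + mu:])"
    for r q X :: "'a poly"
    by (simp add: algebra_simps smult_add_left smult_diff_left smult_add_right smult_diff_right)
  have "map_poly vr_eval1 f = map_poly re f + map_poly vp f"
    by (simp add: poly_eq_iff coeff_map_poly vr_eval1_def zero_vr_def)
  then show ?thesis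
    unfolding gray_def Let_def by (simp only: identity)
qed

lemma gray_dvd:
  assumes "g1 dvd monom 1 n - [:lam + mu:]" "g2 dvd monom 1 n - [:lam:]"
    and "g1 dvd map_poly vr_eval1 f" "g2 dvd map_poly re f"
  shows "g1 * g2 dvd gray n lam mu f"
proof -
  have "g1 * g2 dvd smult (- (lam + mu)) (map_poly vr_eval1 f) * (monom 1 n - [:lam:])"
    using assms(3,2) by (intro mult_dvd_mono) (simp_all add: dvd_smult)
  moreover have "g1 * g2 dvd smult lam (map_poly re f) * (monom 1 n - [:lam + mu:])"
    using mult_dvd_mono[OF assms(4,1)] by (metis dvd_smult mult.commute mult_smult_left)
  ultimately show ?thesis
    unfolding gray_eq by (rule dvd_add)
qed

theorem theorem3p10:
  fixes lam mu :: "'a::{finite,field}" and n :: nat and C :: "'a vr poly set"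
    and g1 g2 :: "'a poly"
  assumes "prime (CARD('a))" and "odd (CARD('a))"
    and "n > 0"
    and "\<exists>u. VR lam mu * u = 1"
    and "constacyclic_code n (VR lam mu) C"
    and "C = Rn_ideal_gen n (VR lam mu)
               {reduce n (VR lam mu) (smult vR (emb g1)),
                reduce n (VR lam mu) (smult (1 - vR) (emb g2))}"
    and "lead_coeff g1 = 1" and "g1 dvd monom 1 n - [:lam + mu:]"
    and "lead_coeff g2 = 1" and "g2 dvd monom 1 n - [:lam:]"
  shows "gray n lam mu ` C \<subseteq> {h. \<exists>a. (monom 1 (2 * n) - 1) dvd (h - a * (g1 * g2))}"
proof
  let ?gens = "{smult vR (emb g1), smult (1 - vR) (emb g2)}"
  have C_eq: "C = Rn_ideal_gen n (VR lam mu) (reduce n (VR lam mu) ` ?gens)"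
    using assms(6) by simp
  have C_re: "C \<subseteq> {f \<in> Rn n. g2 dvd map_poly re f}"
    unfolding C_eq using comm_ring_hom_re assms(3,10)
    by (intro Rn_ideal_gen_reduce_subset_dvd) (simp_all add: map_poly_re_generators)
  have C_eval1: "C \<subseteq> {f \<in> Rn n. g1 dvd map_poly vr_eval1 f}"
    unfolding C_eq using comm_ring_hom_vr_eval1 assms(3,8)
    by (intro Rn_ideal_gen_reduce_subset_dvd) (simp_all add: vr_eval1_def map_poly_vr_eval1_generators)
  fix h assume "h \<in> gray n lam mu ` C"
  then obtain f where "f \<in> C" "h = gray n lam mu f" by blast
  then have "g1 * g2 dvd h"
    using C_re C_eval1 assms(8,10) by (auto intro: gray_dvd)
  then obtain a where "h = g1 * g2 * a" by (rule dvdE)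
  then show "h \<in> {h. \<exists>a. (monom 1 (2 * n) - 1) dvd (h - a * (g1 * g2))}"
    by (auto simp: mult.commute intro!: exI[of _ a])
qed

end
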